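(* Let $n,m$ be positive integers with $n>m$, both in canonical form, and let $k=n-m$. Then $n+(-m)\triangleq\{k-1\mid k+1\}\triangleq k+\underline{0}$, where $k-1,k+1,k$ are canonical integers and $\underline{0}\cong 1+(-1)$.
   Context: Games are short normal-play combinatorial games, written $G\cong\{L(G)\mid R(G)\}$, $\cong$ meaning identical literal forms. Canonical integers: $0\cong\{\ \mid\ \}$, $n\cong\{n-1\mid\ \}$ for $n>0$, $n\cong\{\ \mid n+1\}$ for $n<0$. Disjunctive sum $G+H\cong\{L(G)+H,G+L(H)\mid R(G)+H,G+R(H)\}$, negation $-G\cong\{-R(G)\mid -L(G)\}$. $\underline{0}$ denotes the literal game $1+(-1)\cong\{-1\mid 1\}$. Equivalence modulo domination: $G\triangleq H$ means that in $G+(-H)$, for every move by either player as first player in one summand, the other player has a response in the other summand after which the responder wins. *)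

theory Defs
  imports Main "HOL-Library.FSet"
begin

text \<open>Short games as literal forms: a pair of finite sets of Left and Right options.\<close>
datatype game = Game (LO: "game fset") (RO: "game fset")

primrec neg :: "game \<Rightarrow> game" where
  "neg (Game L R) = Game (fimage neg R) (fimage neg L)"

lemma size_opt_less:
  assumes "z |\<in>| A"
  shows "size z < Suc ((\<Sum>x\<in>fset A. Suc (size x)) + (\<Sum>x\<in>fset B. Suc (size (x::game))))"
proof -
  have "Suc (size z) \<le> (\<Sum>x\<in>fset A. Suc (size x))"
    using assms by (intro member_le_sum) auto
  then show ?thesis by linarith
qed

lemma size_opt_less2:
  assumes "z |\<in>| B"
  shows "size z < Suc ((\<Sum>x\<in>fset A. Suc (size (x::game))) + (\<Sum>x\<in>fset B. Suc (size x)))"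
proof -
  have "Suc (size z) \<le> (\<Sum>x\<in>fset B. Suc (size x))"
    using assms by (intro member_le_sum) auto
  then show ?thesis by linarith
qed

lemma size_LO: "x |\<in>| LO g \<Longrightarrow> size x < size g"
  by (cases g) (auto simp: size_fset_overloaded_simps intro: size_opt_less)

lemma size_RO: "x |\<in>| RO g \<Longrightarrow> size x < size g"
  by (cases g) (auto simp: size_fset_overloaded_simps intro: size_opt_less2)

lemma size_grand1: "x |\<in>| R \<Longrightarrow> xa |\<in>| LO x \<Longrightarrow> size xa < size (Game L R)"
proof -
  assume a: "x |\<in>| R" "xa |\<in>| LO x"
  have "size xa < size x" using a(2) by (rule size_LO)
  moreover have "size x < size (Game L R)" using a(1) size_RO[of x "Game L R"] by simp
  ultimately show ?thesis by simp
qed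

lemma size_grand2: "x |\<in>| L \<Longrightarrow> xa |\<in>| RO x \<Longrightarrow> size xa < size (Game L R)"
proof -
  assume a: "x |\<in>| L" "xa |\<in>| RO x"
  have "size xa < size x" using a(2) by (rule size_RO)
  moreover have "size x < size (Game L R)" using a(1) size_LO[of x "Game L R"] by simp
  ultimately show ?thesis by simp
qed

function plus :: "game \<Rightarrow> game \<Rightarrow> game" where
  "plus (Game GL GR) (Game HL HR) =
     Game ((\<lambda>x. plus x (Game HL HR)) |`| GL |\<union>| (\<lambda>y. plus (Game GL GR) y) |`| HL)
          ((\<lambda>x. plus x (Game HL HR)) |`| GR |\<union>| (\<lambda>y. plus (Game GL GR) y) |`| HR)"
  by pat_completeness auto
termination
  by (relation "measure (\<lambda>(G, H). size G + size H)")
     (auto simp: size_fset_overloaded_simps intro: size_opt_less size_opt_less2 add_strict_left_mono add_strict_right_mono)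

function int_game :: "int \<Rightarrow> game" where
  "int_game n = (if n = 0 then Game {||} {||}
                 else if n > 0 then Game {|int_game (n - 1)|} {||}
                 else Game {||} {|int_game (n + 1)|})"
  by auto
termination by (relation "measure (\<lambda>n. nat \<bar>n\<bar>)") auto

declare int_game.simps [simp del]

definition zero_ul :: game where
  "zero_ul = plus (int_game 1) (neg (int_game 1))"

text \<open>Normal-play outcomes.
  right_wins_2nd G: Right wins G when Left moves first (every Left move has a winning Right reply).
  left_wins_2nd G: Left wins G when Right moves first.\<close>
function left_wins_2nd :: "game \<Rightarrow> bool" and right_wins_2nd :: "game \<Rightarrow> bool" where
  "left_wins_2nd (Game L R) =
     (\<forall>gr\<in>fset R. \<exists>grl\<in>fset (LO gr). left_wins_2nd grl)"
| "right_wins_2nd (Game L R) =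
     (\<forall>gl\<in>fset L. \<exists>glr\<in>fset (RO gl). right_wins_2nd glr)"
  by pat_completeness auto
termination
  by (relation "measure (\<lambda>x. case x of Inl G \<Rightarrow> size G | Inr G \<Rightarrow> size G)")
     (simp_all only: in_measure sum.case wf_measure size_grand1 size_grand2)

text \<open>Equivalence modulo domination G \<triangleq> H: in G + (-H), every move by either player
  (as first player) in one summand has a reply by the other player in the other summand
  after which the responder wins (moving second).  Left options of -H are -(H^R), right
  options of -H are -(H^L).\<close>
definition eq_dom :: "game \<Rightarrow> game \<Rightarrow> bool" (infix "\<triangleq>" 50) where
  "G \<triangleq> H \<longleftrightarrow>
     (\<forall>gl. gl |\<in>| LO G \<longrightarrow> (\<exists>hl. hl |\<in>| LO H \<and> right_wins_2nd (plus gl (neg hl)))) \<and>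
     (\<forall>hr. hr |\<in>| RO H \<longrightarrow> (\<exists>gr. gr |\<in>| RO G \<and> right_wins_2nd (plus gr (neg hr)))) \<and>
     (\<forall>gr. gr |\<in>| RO G \<longrightarrow> (\<exists>hr. hr |\<in>| RO H \<and> left_wins_2nd (plus gr (neg hr)))) \<and>
     (\<forall>hl. hl |\<in>| LO H \<longrightarrow> (\<exists>gl. gl |\<in>| LO G \<and> left_wins_2nd (plus gl (neg hl))))"

end

theory Submission
  imports Defs
begin

text \<open>Call G an integer form of value v if every Left option is an integer form of value v - 1,
  every Right option one of value v + 1, and the player who is ahead in value always has a move.
  Integer forms are closed under sum and negation, canonical integers are integer forms, and an
  integer form of value v \<le> 0 (v \<ge> 0) is won by Right (Left) moving second.  Hence G + (-H) is
  a second-player win whenever G and H are integer forms of equal value.  Now n + (-m),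
  {k-1 | k+1} and k + (1 + (-1)) are all integer forms of value k with options on both sides,
  all their Left options having value k - 1 and all their Right options value k + 1, so every
  move in one of them is answered by a move of equal value in the other.\<close>

inductive int_form :: "game \<Rightarrow> int \<Rightarrow> bool" where
  int_formI: "(\<And>x. x |\<in>| LO G \<Longrightarrow> int_form x (v - 1)) \<Longrightarrow>
    (\<And>x. x |\<in>| RO G \<Longrightarrow> int_form x (v + 1)) \<Longrightarrow>
    (0 < v \<Longrightarrow> LO G \<noteq> {||}) \<Longrightarrow> (v < 0 \<Longrightarrow> RO G \<noteq> {||}) \<Longrightarrow> int_form G v"

lemma LO_plus: "LO (plus G H) = (\<lambda>x. plus x H) |`| LO G |\<union>| (\<lambda>y. plus G y) |`| LO H"
  by (cases G; cases H) simp

lemma RO_plus: "RO (plus G H) = (\<lambda>x. plus x H) |`| RO G |\<union>| (\<lambda>y. plus G y) |`| RO H"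
  by (cases G; cases H) simp

lemma LO_neg: "LO (neg G) = neg |`| RO G"
  by (cases G) simp

lemma RO_neg: "RO (neg G) = neg |`| LO G"
  by (cases G) simp

lemma right_wins_2nd_neg_iff: "right_wins_2nd (neg G) \<longleftrightarrow> left_wins_2nd G"
proof (induction G rule: measure_induct_rule[of size])
  case (less G)
  obtain L R where G: "G = Game L R" by (cases G)
  have IH: "right_wins_2nd (neg grl) \<longleftrightarrow> left_wins_2nd grl"
    if "gr |\<in>| R" and "grl |\<in>| LO gr" for gr grl
    using less.IH size_grand1[OF that] by (simp add: G)
  have "right_wins_2nd (neg G) \<longleftrightarrow> (\<forall>gr|\<in>|R. \<exists>grl|\<in>|LO gr. right_wins_2nd (neg grl))"
    by (simp add: G RO_neg)
  also have "\<dots> \<longleftrightarrow> left_wins_2nd G"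
    using IH by (auto simp: G)
  finally show ?case .
qed

lemma int_form_neg: "int_form G v \<Longrightarrow> int_form (neg G) (- v)"
proof (induction rule: int_form.induct)
  case IH: (int_formI G v)
  show ?case
    by (rule int_formI) (use IH in \<open>auto simp: LO_neg RO_neg\<close>)
qed

lemma int_form_plus: "int_form G a \<Longrightarrow> int_form H b \<Longrightarrow> int_form (plus G H) (a + b)"
proof (induction G a arbitrary: H b rule: int_form.induct)
  case G: (int_formI G a)
  from G.prems show ?case
  proof (induction H b rule: int_form.induct)
    case H: (int_formI H b)
    have "int_form H b" by (rule int_formI) (use H in auto)
    show ?case
    proof (rule int_formI)
      fix x assume "x |\<in>| LO (plus G H)"
      then consider gl where "gl |\<in>| LO G" "x = plus gl H" | hl where "hl |\<in>| LO H" "x = plus G hl"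
        by (auto simp: LO_plus)
      then show "int_form x (a + b - 1)"
      proof cases
        case (1 gl)
        then show ?thesis using G.IH(1)[of gl H b] \<open>int_form H b\<close> by (simp add: diff_add_eq)
      next
        case (2 hl)
        then show ?thesis using H.IH(1)[of hl] by (simp add: add_diff_eq)
      qed
    next
      fix x assume "x |\<in>| RO (plus G H)"
      then consider gr where "gr |\<in>| RO G" "x = plus gr H" | hr where "hr |\<in>| RO H" "x = plus G hr"
        by (auto simp: RO_plus)
      then show "int_form x (a + b + 1)"
      proof cases
        case (1 gr)
        then show ?thesis using G.IH(2)[of gr H b] \<open>int_form H b\<close> by (simp add: ac_simps)
      next
        case (2 hr)
        then show ?thesis using H.IH(2)[of hr] by (simp add: ac_simps)
      qed
    next
      assume "0 < a + b"
      then have "0 < a \<or> 0 < b" by linarith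
      then show "LO (plus G H) \<noteq> {||}"
        using G.hyps(3) H.hyps(3) by (auto simp: LO_plus)
    next
      assume "a + b < 0"
      then have "a < 0 \<or> b < 0" by linarith
      then show "RO (plus G H) \<noteq> {||}"
        using G.hyps(4) H.hyps(4) by (auto simp: RO_plus)
    qed
  qed
qed

lemma int_form_int_game: "int_form (int_game n) n"
proof (induction n rule: int_game.induct)
  case IH: (1 n)
  consider "n < 0" | "n = 0" | "0 < n" by linarith
  then show ?case
  proof cases
    case 1
    have "int_game n = Game {||} {|int_game (n + 1)|}"
      unfolding int_game.simps[of n] using 1 by simp
    then show ?thesis by simp (rule int_formI; use IH 1 in auto)
  next
    case 2
    have "int_game n = Game {||} {||}"
      unfolding int_game.simps[of n] using 2 by simp
    then show ?thesis by simp (rule int_formI; use 2 in auto)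
  next
    case 3
    have "int_game n = Game {|int_game (n - 1)|} {||}"
      unfolding int_game.simps[of n] using 3 by simp
    then show ?thesis by simp (rule int_formI; use IH 3 in auto)
  qed
qed

lemma int_form_zero_ul: "int_form zero_ul 0"
  unfolding zero_ul_def using int_form_plus[OF int_form_int_game int_form_neg[OF int_form_int_game]]
  by (metis add.right_inverse)

lemma int_form_right_wins_2nd: "int_form G v \<Longrightarrow> v \<le> 0 \<Longrightarrow> right_wins_2nd G"
proof (induction G arbitrary: v rule: measure_induct_rule[of size])
  case (less G)
  obtain L R where G: "G = Game L R" by (cases G)
  show ?case unfolding G right_wins_2nd.simps
  proof
    fix gl assume "gl \<in> fset L"
    then have gl: "gl |\<in>| LO G" "int_form gl (v - 1)"
      using less.prems int_form.simps[of G] by (auto simp: G)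
    then obtain glr where glr: "glr |\<in>| RO gl"
      using less.prems int_form.simps[of gl] by fastforce
    then have "int_form glr v" using gl int_form.simps[of gl] by auto
    moreover have "size glr < size G" using size_RO[OF glr] size_LO[OF gl(1)] by simp
    ultimately show "\<exists>glr\<in>fset (RO gl). right_wins_2nd glr" using glr less by auto
  qed
qed

lemma int_form_left_wins_2nd: "int_form G v \<Longrightarrow> 0 \<le> v \<Longrightarrow> left_wins_2nd G"
  using int_form_right_wins_2nd[OF int_form_neg] right_wins_2nd_neg_iff by fastforce

lemma int_form_difference_wins_2nd:
  assumes "int_form G v" and "int_form H v"
  shows "right_wins_2nd (plus G (neg H))" and "left_wins_2nd (plus G (neg H))"
proof -
  have "int_form (plus G (neg H)) 0"
    using int_form_plus[OF assms(1) int_form_neg[OF assms(2)]] by simp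
  then show "right_wins_2nd (plus G (neg H))" and "left_wins_2nd (plus G (neg H))"
    by (auto intro: int_form_right_wins_2nd int_form_left_wins_2nd)
qed

lemma eq_dom_if_int_forms:
  assumes "int_form G v" and "int_form H v"
    and "LO G = {||} \<longleftrightarrow> LO H = {||}" and "RO G = {||} \<longleftrightarrow> RO H = {||}"
  shows "G \<triangleq> H"
proof -
  have L: "int_form x (v - 1)" if "x |\<in>| LO G |\<union>| LO H" for x
    using that assms(1,2) int_form.simps by blast
  have R: "int_form x (v + 1)" if "x |\<in>| RO G |\<union>| RO H" for x
    using that assms(1,2) int_form.simps by blast
  show ?thesis unfolding eq_dom_def
  proof (intro conjI allI impI)
    fix gl assume gl: "gl |\<in>| LO G"
    with assms(3) obtain hl where "hl |\<in>| LO H" by fastforce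
    with gl show "\<exists>hl. hl |\<in>| LO H \<and> right_wins_2nd (plus gl (neg hl))"
      using L int_form_difference_wins_2nd(1) by blast
  next
    fix hr assume hr: "hr |\<in>| RO H"
    with assms(4) obtain gr where "gr |\<in>| RO G" by fastforce
    with hr show "\<exists>gr. gr |\<in>| RO G \<and> right_wins_2nd (plus gr (neg hr))"
      using R int_form_difference_wins_2nd(1) by blast
  next
    fix gr assume gr: "gr |\<in>| RO G"
    with assms(4) obtain hr where "hr |\<in>| RO H" by fastforce
    with gr show "\<exists>hr. hr |\<in>| RO H \<and> left_wins_2nd (plus gr (neg hr))"
      using R int_form_difference_wins_2nd(2) by blast
  next
    fix hl assume hl: "hl |\<in>| LO H"
    with assms(3) obtain gl where "gl |\<in>| LO G" by fastforce
    with hl show "\<exists>gl. gl |\<in>| LO G \<and> left_wins_2nd (plus gl (neg hl))"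
      using L int_form_difference_wins_2nd(2) by blast
  qed
qed

theorem lemma3p2:
  fixes n m k :: int
  assumes "0 < m" and "m < n" and "k = n - m"
  shows "plus (int_game n) (neg (int_game m)) \<triangleq> Game {|int_game (k - 1)|} {|int_game (k + 1)|}
         \<and> Game {|int_game (k - 1)|} {|int_game (k + 1)|} \<triangleq> plus (int_game k) zero_ul"
proof -
  have "0 < k" using assms by simp
  have "int_form (Game {|int_game (k - 1)|} {|int_game (k + 1)|}) k"
    by (rule int_formI) (auto simp: int_form_int_game)
  moreover have "int_form (plus (int_game n) (neg (int_game m))) k"
    using int_form_plus[OF int_form_int_game int_form_neg[OF int_form_int_game]] assms by simp
  moreover have "int_form (plus (int_game k) zero_ul) k"
    using int_form_plus[OF int_form_int_game int_form_zero_ul] by simp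
  moreover have "LO (int_game i) \<noteq> {||}" if "0 < i" for i
    using that int_form_int_game[of i] int_form.simps by blast
  ultimately show ?thesis
    using \<open>0 < k\<close> assms
    by (intro conjI eq_dom_if_int_forms) (auto simp: LO_plus RO_plus RO_neg zero_ul_def)
qed

end
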